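(* Let $K$ be a compact Hausdorff space without isolated points and let $X$ be a closed subspace of $C(K)$. The following are equivalent: (a) The pair $(X,C(K))$ has the Daugavet property. (b) For every $\varepsilon>0$, every $x^*\in S(X^* )$ and every nonempty open set $U\subset K$ there is a point $u\in U$ with $\|x^*+\delta_u^*|_X\|>2-\varepsilon$. (c) For every $x^*\in S(X^* )$ and every nonempty open set $U\subset K$ there is a nonempty closed $G_\delta$-set $G\subset U$ such that $\|x^*+\delta_u^*|_X\|=2$ for every $u\in G$.
   Context: $C(K)$ is the space of real continuous functions on $K$ with the sup norm. For $k\in K$, $\delta_k^*\in C(K)^*$ is the evaluation functional $\delta_k^*(f)=f(k)$, and $\delta_k^*|_X$ its restriction to $X$. $S(X^* )$ is the unit sphere of $X^*$. If $X$ is a closed subspace of a Banach space $Y$ with inclusion $J$, the pair $(X,Y)$ has the Daugavet property if every bounded rank-one linear operator $T:X\to Y$ satisfies $\|J+T\|=1+\|T\|$. *)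

theory Defs
  imports "HOL-Analysis.Analysis"
begin

text \<open>C(K) is modelled by the type of bounded continuous real functions on K
  with the sup norm; for compact K this is exactly C(K).\<close>

definition linear_on_sub :: "'v::real_vector set \<Rightarrow> ('v \<Rightarrow> 'w::real_vector) \<Rightarrow> bool" where
  "linear_on_sub X T \<longleftrightarrow>
     (\<forall>x\<in>X. \<forall>y\<in>X. \<forall>a b::real. T (a *\<^sub>R x + b *\<^sub>R y) = a *\<^sub>R T x + b *\<^sub>R T y)"

definition bounded_linear_on_sub :: "'v::real_normed_vector set \<Rightarrow> ('v \<Rightarrow> 'w::real_normed_vector) \<Rightarrow> bool" where
  "bounded_linear_on_sub X T \<longleftrightarrow>
     linear_on_sub X T \<and> (\<exists>B. \<forall>x\<in>X. norm (T x) \<le> B * norm x)"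

definition opnorm_on :: "'v::real_normed_vector set \<Rightarrow> ('v \<Rightarrow> 'w::real_normed_vector) \<Rightarrow> real" where
  "opnorm_on X T = Sup {norm (T x) | x. x \<in> X \<and> norm x \<le> 1}"

text \<open>Elements of the dual X* are represented by bounded linear functionals on X
  (values outside X are irrelevant); their norm is the dual norm.\<close>
abbreviation dual_norm :: "'v::real_normed_vector set \<Rightarrow> ('v \<Rightarrow> real) \<Rightarrow> real" where
  "dual_norm X \<phi> \<equiv> opnorm_on X \<phi>"

definition dual_sphere :: "'v::real_normed_vector set \<Rightarrow> ('v \<Rightarrow> real) set" where
  "dual_sphere X = {\<phi>. bounded_linear_on_sub X \<phi> \<and> dual_norm X \<phi> = 1}"

text \<open>Evaluation functional delta k (restricted to X when used with dual_norm X).\<close>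
definition delta_eval :: "'a::topological_space \<Rightarrow> ('a \<Rightarrow>\<^sub>C real) \<Rightarrow> real" where
  "delta_eval k f = apply_bcontfun f k"

definition rank_one_op :: "'v::real_normed_vector set \<Rightarrow> ('v \<Rightarrow> 'w::real_normed_vector) \<Rightarrow> bool" where
  "rank_one_op X T \<longleftrightarrow> bounded_linear_on_sub X T \<and> dim (T ` X) = 1"

text \<open>Daugavet property of the pair (X, Y), X a closed subspace of Y, J the inclusion.\<close>
definition daugavet_pair :: "'v::real_normed_vector set \<Rightarrow> bool" where
  "daugavet_pair X \<longleftrightarrow>
     (\<forall>T::'v \<Rightarrow> 'v. rank_one_op X T \<longrightarrow> opnorm_on X (\<lambda>x. x + T x) = 1 + opnorm_on X T)"

definition gdelta_set :: "'a::topological_space set \<Rightarrow> bool" where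
  "gdelta_set G \<longleftrightarrow> (\<exists>\<F>. countable \<F> \<and> (\<forall>V\<in>\<F>. open V) \<and> G = \<Inter>\<F>)"

end

theory Submission
  imports Defs
begin

text \<open>
  (a) implies (b): take a bump function y supported in U with y(u0) = 1 = \<parallel>y\<parallel>. The rank-one
  operator f \<mapsto> x*(f) y has norm 1, so the Daugavet property gives f in the unit ball and a
  point t with |f(t) + x*(f) y(t)| close to 2; this forces y(t) \<noteq> 0, hence t \<in> U, and
  |x*(f) + f(t)| close to 2.

  (b) implies (a): a rank-one operator is T = n x* \<otimes> y with \<parallel>x*\<parallel> = 1, and y peaking at t0
  with y(t0) = 1 = \<parallel>y\<parallel>. Applying (b) on the open set where y > 1 - d yields f with
  f(u) and x*(f) both close to 1, so \<parallel>f + T f\<parallel> \<ge> f(u) + n x*(f) y(u) is close to 1 + n.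

  (b) implies (c): u \<mapsto> \<parallel>x* + \<delta>u\<parallel> is lower semicontinuous, so by (b) the sets where it exceeds
  2 - 1/n are open and dense, and a Baire-type nested-closure argument in the compact space K
  produces the nonempty closed G\<delta> set inside U.
\<close>

section \<open>Operator norms on a subspace\<close>

lemma opnorm_on_le:
  assumes "subspace X" and "\<And>x. x \<in> X \<Longrightarrow> norm x \<le> 1 \<Longrightarrow> norm (T x) \<le> M"
  shows "opnorm_on X T \<le> M"
  unfolding opnorm_on_def
  by (rule cSup_least) (use subspace_0[OF assms(1)] assms(2) in auto)

lemma norm_le_opnorm_on:
  assumes "\<And>x. x \<in> X \<Longrightarrow> norm x \<le> 1 \<Longrightarrow> norm (T x) \<le> M" and "x \<in> X" "norm x \<le> 1"
  shows "norm (T x) \<le> opnorm_on X T"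
  unfolding opnorm_on_def
  by (rule cSup_upper) (use assms in \<open>auto intro!: bdd_aboveI[of _ M]\<close>)

lemma opnorm_on_approx:
  assumes "subspace X" and "\<And>x. x \<in> X \<Longrightarrow> norm x \<le> 1 \<Longrightarrow> norm (T x) \<le> M"
    and "c < opnorm_on X T"
  obtains x where "x \<in> X" "norm x \<le> 1" "c < norm (T x)"
proof -
  let ?S = "{norm (T x) | x. x \<in> X \<and> norm x \<le> 1}"
  have "?S \<noteq> {}" using subspace_0[OF assms(1)] by auto
  moreover have "bdd_above ?S" using assms(2) by (auto intro!: bdd_aboveI[of _ M])
  ultimately obtain s where "s \<in> ?S" "c < s"
    using assms(3) less_cSup_iff[of ?S c] unfolding opnorm_on_def by auto
  then show ?thesis using that by auto
qed

lemma opnorm_on_cong: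
  assumes "\<And>x. x \<in> X \<Longrightarrow> norm (T x) = norm (S x)"
  shows "opnorm_on X T = opnorm_on X S"
proof -
  have "{norm (T x) | x. x \<in> X \<and> norm x \<le> 1} = {norm (S x) | x. x \<in> X \<and> norm x \<le> 1}"
    using assms by force
  then show ?thesis unfolding opnorm_on_def by simp
qed

lemma linear_on_sub_scaleR:
  assumes "linear_on_sub X T" "x \<in> X"
  shows "T (c *\<^sub>R x) = c *\<^sub>R T x"
proof -
  have "T (c *\<^sub>R x + 0 *\<^sub>R x) = c *\<^sub>R T x + 0 *\<^sub>R T x"
    using assms unfolding linear_on_sub_def by blast
  then show ?thesis by simp
qed

lemma linear_on_sub_zero: "linear_on_sub X T \<Longrightarrow> 0 \<in> X \<Longrightarrow> T 0 = 0"
  using linear_on_sub_scaleR[of X T 0 0] by simp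

lemma bounded_linear_on_sub_unit_ball:
  assumes "bounded_linear_on_sub X T"
  obtains M where "\<And>x. x \<in> X \<Longrightarrow> norm x \<le> 1 \<Longrightarrow> norm (T x) \<le> M"
proof -
  obtain B where B: "\<forall>x\<in>X. norm (T x) \<le> B * norm x"
    using assms unfolding bounded_linear_on_sub_def by blast
  have "norm (T x) \<le> max B 0" if "x \<in> X" "norm x \<le> 1" for x
  proof -
    have "norm (T x) \<le> B * norm x" using B that(1) by blast
    also have "\<dots> \<le> max B 0 * norm x" by (rule mult_right_mono) simp_all
    also have "\<dots> \<le> max B 0" using that(2) by (simp add: mult_left_le)
    finally show ?thesis .
  qed
  then show ?thesis using that by blast
qed

lemma opnorm_on_nonneg:
  assumes "subspace X" "bounded_linear_on_sub X T"
  shows "0 \<le> opnorm_on X T"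
proof -
  obtain M where "\<And>x. x \<in> X \<Longrightarrow> norm x \<le> 1 \<Longrightarrow> norm (T x) \<le> M"
    using bounded_linear_on_sub_unit_ball[OF assms(2)] by blast
  then have "norm (T 0) \<le> opnorm_on X T"
    by (rule norm_le_opnorm_on) (use subspace_0[OF assms(1)] in auto)
  moreover have "T 0 = 0"
    using linear_on_sub_zero[of X T] assms subspace_0[OF assms(1)] by (simp add: bounded_linear_on_sub_def)
  ultimately show ?thesis by simp
qed

lemma norm_le_opnorm_on_mult:
  assumes "subspace X" "bounded_linear_on_sub X T" "x \<in> X"
  shows "norm (T x) \<le> opnorm_on X T * norm x"
proof (cases "x = 0")
  case True
  then show ?thesis
    using linear_on_sub_zero[of X T] assms subspace_0[OF assms(1)] by (simp add: bounded_linear_on_sub_def)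
next
  case False
  obtain M where M: "\<And>x. x \<in> X \<Longrightarrow> norm x \<le> 1 \<Longrightarrow> norm (T x) \<le> M"
    using bounded_linear_on_sub_unit_ball[OF assms(2)] by blast
  let ?z = "(1 / norm x) *\<^sub>R x"
  have z: "?z \<in> X" "norm ?z \<le> 1" using assms subspace_scale False by auto
  have "norm (T ?z) \<le> opnorm_on X T" by (rule norm_le_opnorm_on[OF M z])
  moreover have "T ?z = (1 / norm x) *\<^sub>R T x"
    using linear_on_sub_scaleR[of X T x] assms(2,3) by (simp add: bounded_linear_on_sub_def)
  ultimately show ?thesis using False by (simp add: divide_le_eq)
qed

lemma dual_sphere_abs_le:
  assumes "subspace X" "\<phi> \<in> dual_sphere X" "x \<in> X"
  shows "\<bar>\<phi> x\<bar> \<le> norm x"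
  using norm_le_opnorm_on_mult[OF assms(1) _ assms(3), of \<phi>] assms(2)
  by (simp add: dual_sphere_def)

lemma dual_sphere_nonzero:
  assumes "subspace X" "\<phi> \<in> dual_sphere X"
  obtains x0 where "x0 \<in> X" "\<phi> x0 \<noteq> 0"
proof -
  have "\<exists>x0\<in>X. \<phi> x0 \<noteq> 0"
  proof (rule ccontr)
    assume "\<not> ?thesis"
    then have "dual_norm X \<phi> \<le> 0" by (intro opnorm_on_le[OF assms(1)]) auto
    then show False using assms(2) by (simp add: dual_sphere_def)
  qed
  then show ?thesis using that by blast
qed

lemma dual_sphere_normalize:
  assumes sub: "subspace X" and \<psi>: "bounded_linear_on_sub X \<psi>" and pos: "0 < opnorm_on X \<psi>"
  shows "(\<lambda>x. \<psi> x / opnorm_on X \<psi>) \<in> dual_sphere X"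
proof -
  define n where "n = opnorm_on X \<psi>"
  define \<phi> where "\<phi> x = \<psi> x / n" for x
  have npos: "0 < n" using pos by (simp add: n_def)
  have \<phi>_bound: "\<bar>\<phi> x\<bar> \<le> norm x" if "x \<in> X" for x
    using norm_le_opnorm_on_mult[OF sub \<psi> that] npos
    by (simp add: \<phi>_def n_def divide_le_eq mult.commute)
  have "linear_on_sub X \<phi>"
    using \<psi> unfolding bounded_linear_on_sub_def linear_on_sub_def \<phi>_def
    by (simp add: add_divide_distrib)
  then have \<phi>_bl: "bounded_linear_on_sub X \<phi>"
    unfolding bounded_linear_on_sub_def using \<phi>_bound by (intro conjI exI[of _ 1]) auto
  have "dual_norm X \<phi> \<le> 1" by (rule opnorm_on_le[OF sub]) (use \<phi>_bound in force)
  moreover have "1 \<le> dual_norm X \<phi>"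
  proof (rule ccontr)
    assume "\<not> 1 \<le> dual_norm X \<phi>"
    moreover have "n \<le> n * dual_norm X \<phi>"
      unfolding n_def
    proof (rule opnorm_on_le[OF sub])
      fix x assume x: "x \<in> X" "norm x \<le> 1"
      have "\<bar>\<phi> x\<bar> \<le> dual_norm X \<phi> * norm x" using norm_le_opnorm_on_mult[OF sub \<phi>_bl x(1)] by simp
      also have "\<dots> \<le> dual_norm X \<phi>" using x(2) opnorm_on_nonneg[OF sub \<phi>_bl] by (simp add: mult_left_le)
      finally show "norm (\<psi> x) \<le> opnorm_on X \<psi> * dual_norm X \<phi>"
        using npos by (simp add: \<phi>_def n_def divide_le_eq mult.commute)
    qed
    ultimately show False using npos by (simp add: mult_less_cancel_left1)
  qed
  ultimately show ?thesis
    using \<phi>_bl unfolding dual_sphere_def \<phi>_def n_def by simp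
qed

section \<open>Compact Hausdorff spaces\<close>

lemma Hausdorff_space_euclidean_t2: "Hausdorff_space (euclidean :: 'a::t2_space topology)"
  unfolding Hausdorff_space_def disjnt_def using separation_t2 by (metis open_openin)

lemma compact_space_euclidean_UNIV:
  "compact_space (euclidean :: 'a::topological_space topology) \<longleftrightarrow> compact (UNIV :: 'a set)"
  unfolding compact_space_def by simp

lemma compact_t2_closure_nhd:
  fixes p :: "'a::t2_space"
  assumes "compact (UNIV :: 'a set)" "open S" "p \<in> S"
  obtains W where "open W" "p \<in> W" "closure W \<subseteq> S"
proof -
  have "regular_space (euclidean :: 'a topology)"
    by (rule compact_Hausdorff_imp_regular_space)
      (simp_all add: compact_space_euclidean_UNIV assms(1) Hausdorff_space_euclidean_t2)
  moreover have "closedin euclidean (- S)" using assms(2) closed_closedin by blast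
  moreover have "p \<in> topspace euclidean - (- S)" using assms(3) by simp
  ultimately obtain W where "openin euclidean W" "p \<in> W" "disjnt (- S) (euclidean closure_of W)"
    unfolding regular_space by blast
  then show ?thesis using that by (auto simp: disjnt_def)
qed

lemma compact_t2_Urysohn_bump:
  fixes p :: "'a::t2_space"
  assumes K: "compact (UNIV :: 'a set)" and "open U" "p \<in> U"
  obtains y :: "'a \<Rightarrow>\<^sub>C real"
    where "\<And>t. 0 \<le> y t" "\<And>t. y t \<le> 1" "y p = 1" "\<And>t. t \<notin> U \<Longrightarrow> y t = 0" "norm y = 1"
proof -
  have normal: "normal_space (euclidean :: 'a topology)"
    by (rule compact_Hausdorff_or_regular_imp_normal_space)
      (simp_all add: compact_space_euclidean_UNIV K Hausdorff_space_euclidean_t2)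
  have closed: "closedin euclidean (- U)" "closedin euclidean {p}" and disjoint: "disjnt (- U) {p}"
    using assms closed_closedin by auto
  obtain f :: "'a \<Rightarrow> real"
    where f: "continuous_map euclidean (top_of_set {0..1}) f" "f ` (- U) \<subseteq> {0}" "f ` {p} \<subseteq> {1}"
    by (rule Urysohn_lemma[OF normal closed disjoint zero_le_one])
  have "continuous_map euclidean euclideanreal f" using f(1) continuous_map_in_subtopology by blast
  then have "continuous_on UNIV f" by simp
  have f01: "f t \<in> {0..1}" for t using f(1) unfolding continuous_map_def by auto
  have "f \<in> bcontfun" by (rule bcontfun_normI[OF \<open>continuous_on UNIV f\<close>, of 1]) (use f01 in auto)
  then have y: "apply_bcontfun (Bcontfun f) = f" by (simp add: Bcontfun_inverse)
  have "norm (Bcontfun f) \<le> 1" by (rule norm_bound) (use f01 in \<open>simp add: y\<close>)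
  moreover have "1 \<le> norm (Bcontfun f)" using norm_bounded[of "Bcontfun f" p] f(3) by (simp add: y)
  ultimately have "norm (Bcontfun f) = 1" by simp
  with f01 f(2,3) show ?thesis by (intro that[of "Bcontfun f"]) (auto simp: y)
qed

lemma bcontfun_norm_attained:
  fixes f :: "'a::topological_space \<Rightarrow>\<^sub>C real"
  assumes "compact (UNIV :: 'a set)"
  obtains t where "norm f = \<bar>f t\<bar>"
proof -
  obtain t where t: "\<forall>s. \<bar>f s\<bar> \<le> \<bar>f t\<bar>"
    using continuous_attains_sup[OF assms UNIV_not_empty, of "\<lambda>t. \<bar>f t\<bar>"]
    by (auto intro: continuous_intros)
  have "norm f \<le> \<bar>f t\<bar>" by (rule norm_bound) (use t in auto)
  moreover have "\<bar>f t\<bar> \<le> norm f" using norm_bounded[of f t] by simp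
  ultimately show ?thesis using that by simp
qed

lemma bcontfun_norm_gt_imp_point:
  fixes f :: "'a::topological_space \<Rightarrow>\<^sub>C real"
  assumes "c < norm f"
  obtains t where "c < \<bar>f t\<bar>"
proof -
  have "\<not> (\<forall>t. \<bar>f t\<bar> \<le> c)" using assms norm_bound[of f c] by auto
  then show ?thesis using that by (auto simp: not_le)
qed

lemma compact_t2_shrinking_opens:
  fixes V :: "nat \<Rightarrow> 'a::t2_space set"
  assumes K: "compact (UNIV :: 'a set)" and V_open: "\<And>n. open (V n)"
    and V_dense: "\<And>n S. open S \<Longrightarrow> S \<noteq> {} \<Longrightarrow> S \<inter> V n \<noteq> {}"
    and U: "open U" "U \<noteq> {}"
  shows "\<exists>W. \<forall>n. open (W n) \<and> W n \<noteq> {} \<and> closure (W n) \<subseteq> U \<inter> V n \<and>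
    closure (W (Suc n)) \<subseteq> W n"
proof -
  have shrink: "\<exists>W. open W \<and> W \<noteq> {} \<and> closure W \<subseteq> S \<inter> V n"
    if S: "open S" "S \<noteq> {}" for S n
  proof -
    obtain u where u: "u \<in> S \<inter> V n" using V_dense[OF S] by blast
    have SV: "open (S \<inter> V n)" using S V_open by blast
    obtain W where "open W" "u \<in> W" "closure W \<subseteq> S \<inter> V n"
      by (rule compact_t2_closure_nhd[OF K SV u])
    then show ?thesis by blast
  qed
  define step where "step S n = (SOME W. open W \<and> W \<noteq> {} \<and> closure W \<subseteq> S \<inter> V n)" for S n
  have step: "open (step S n) \<and> step S n \<noteq> {} \<and> closure (step S n) \<subseteq> S \<inter> V n"
    if "open S" "S \<noteq> {}" for S n
    unfolding step_def by (rule someI_ex) (rule shrink[OF that])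
  define W where "W = rec_nat (step U 0) (\<lambda>n S. step S (Suc n))"
  have W_0: "W 0 = step U 0" and W_Suc: "W (Suc n) = step (W n) (Suc n)" for n
    by (simp_all add: W_def)
  have W: "open (W n) \<and> W n \<noteq> {} \<and> closure (W n) \<subseteq> U \<inter> V n" for n
  proof (induction n)
    case 0
    show ?case using step[OF U, of 0] by (simp add: W_0)
  next
    case (Suc n)
    have "W n \<subseteq> U" using Suc.IH closure_subset[of "W n"] by blast
    then show ?case using step[of "W n" "Suc n"] Suc.IH by (auto simp: W_Suc)
  qed
  moreover have "closure (W (Suc n)) \<subseteq> W n" for n
    using step[of "W n" "Suc n"] W[of n] by (auto simp: W_Suc)
  ultimately show ?thesis by blast
qed

text \<open>A Baire-category argument: the closures of the shrinking open sets are nested,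
  so by compactness their intersection is nonempty.\<close>

lemma compact_t2_closed_gdelta_in_dense_opens:
  fixes V :: "nat \<Rightarrow> 'a::t2_space set"
  assumes K: "compact (UNIV :: 'a set)" and V_open: "\<And>n. open (V n)"
    and V_dense: "\<And>n S. open S \<Longrightarrow> S \<noteq> {} \<Longrightarrow> S \<inter> V n \<noteq> {}"
    and U: "open U" "U \<noteq> {}"
  obtains G where "G \<noteq> {}" "G \<subseteq> U" "closed G" "gdelta_set G" "G \<subseteq> (\<Inter>n. V n)"
proof -
  have "\<exists>W. \<forall>n. open (W n) \<and> W n \<noteq> {} \<and> closure (W n) \<subseteq> U \<inter> V n \<and>
      closure (W (Suc n)) \<subseteq> W n"
    using K V_open V_dense U by (rule compact_t2_shrinking_opens[where V = V and U = U])
  then obtain W where W_open: "\<And>n. open (W n)" and W_ne: "\<And>n. W n \<noteq> {}"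
    and W_sub: "\<And>n. closure (W n) \<subseteq> U \<inter> V n" and W_shrink: "\<And>n. closure (W (Suc n)) \<subseteq> W n"
    by blast
  define G where "G = (\<Inter>n. closure (W n))"
  have G_ne: "G \<noteq> {}"
    unfolding G_def
  proof (rule compact_space_imp_nest)
    show "compact_space (euclidean :: 'a topology)" using K by (simp add: compact_space_euclidean_UNIV)
    show "decseq (\<lambda>n. closure (W n))"
      using W_shrink closure_subset by (intro decseq_SucI) blast
  qed (use W_ne in auto)
  have G_closure: "G \<subseteq> closure (W n)" for n
    unfolding G_def by (rule INT_lower) simp
  have "G = (\<Inter>n. W n)"
  proof (intro equalityI INT_greatest)
    show "G \<subseteq> W n" for n using G_closure[of "Suc n"] W_shrink[of n] by (rule order_trans)
    show "(\<Inter>n. W n) \<subseteq> G" using closure_subset unfolding G_def by blast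
  qed
  then have "gdelta_set G"
    unfolding gdelta_set_def using W_open by (intro exI[of _ "range W"]) auto
  moreover have "G \<subseteq> U" "G \<subseteq> (\<Inter>n. V n)" using G_closure W_sub by blast+
  moreover have "closed G" unfolding G_def by (intro closed_INT) simp
  ultimately show ?thesis using G_ne that by blast
qed

section \<open>Rank-one operators\<close>

lemma dim_span_singleton: "(y::'b::real_vector) \<noteq> 0 \<Longrightarrow> dim (span {y}) = 1"
  using independent_insertI[of y "{}"] dim_eq_card_independent[of "{y}"] by simp

lemma rank_one_op_scaleR_right:
  assumes sub: "subspace X" and \<phi>: "bounded_linear_on_sub X \<phi>"
    and x0: "x0 \<in> X" "\<phi> x0 \<noteq> 0" and y: "y \<noteq> 0"
  shows "rank_one_op X (\<lambda>x. \<phi> x *\<^sub>R y)"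
proof -
  have lin: "linear_on_sub X \<phi>" using \<phi> by (simp add: bounded_linear_on_sub_def)
  have "linear_on_sub X (\<lambda>x. \<phi> x *\<^sub>R y)"
    using lin unfolding linear_on_sub_def by (simp add: scaleR_add_left)
  moreover obtain B where B: "\<forall>x\<in>X. norm (\<phi> x) \<le> B * norm x"
    using \<phi> unfolding bounded_linear_on_sub_def by blast
  have "norm (\<phi> x *\<^sub>R y) \<le> (B * norm y) * norm x" if "x \<in> X" for x
  proof -
    have "norm (\<phi> x *\<^sub>R y) = norm (\<phi> x) * norm y" by simp
    also have "\<dots> \<le> (B * norm x) * norm y" using B that by (intro mult_right_mono) auto
    finally show ?thesis by (simp add: ac_simps)
  qed
  ultimately have bl: "bounded_linear_on_sub X (\<lambda>x. \<phi> x *\<^sub>R y)"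
    unfolding bounded_linear_on_sub_def by blast
  have "(\<lambda>x. \<phi> x *\<^sub>R y) ` X = span {y}"
  proof
    show "(\<lambda>x. \<phi> x *\<^sub>R y) ` X \<subseteq> span {y}" using span_scale span_base by blast
    show "span {y} \<subseteq> (\<lambda>x. \<phi> x *\<^sub>R y) ` X"
    proof
      fix z assume "z \<in> span {y}"
      then obtain c where c: "z = c *\<^sub>R y" by (auto simp: span_singleton)
      have "(c / \<phi> x0) *\<^sub>R x0 \<in> X" using sub x0 by (simp add: subspace_scale)
      moreover have "\<phi> ((c / \<phi> x0) *\<^sub>R x0) *\<^sub>R y = z"
        using linear_on_sub_scaleR[OF lin x0(1)] x0(2) c by simp
      ultimately show "z \<in> (\<lambda>x. \<phi> x *\<^sub>R y) ` X" by (metis image_eqI)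
    qed
  qed
  then show ?thesis using bl dim_span_singleton[OF y] by (simp add: rank_one_op_def)
qed

lemma bounded_linear_on_sub_factor_span:
  assumes sub: "subspace X" and T: "bounded_linear_on_sub X T"
    and y: "y \<noteq> 0" and range: "T ` X \<subseteq> span {y}"
  obtains \<psi> where "bounded_linear_on_sub X \<psi>" "\<And>x. x \<in> X \<Longrightarrow> T x = \<psi> x *\<^sub>R y"
proof -
  define \<psi> where "\<psi> x = (SOME c. T x = c *\<^sub>R y)" for x
  have T_eq: "T x = \<psi> x *\<^sub>R y" if "x \<in> X" for x
  proof -
    have "\<exists>c. T x = c *\<^sub>R y" using range that by (auto simp: span_singleton)
    then show ?thesis unfolding \<psi>_def by (rule someI_ex)
  qed
  have "linear_on_sub X \<psi>" unfolding linear_on_sub_def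
  proof (intro ballI allI)
    fix x z a b assume xz: "x \<in> X" "z \<in> X"
    then have "a *\<^sub>R x + b *\<^sub>R z \<in> X" using sub by (simp add: subspace_add subspace_scale)
    then have "\<psi> (a *\<^sub>R x + b *\<^sub>R z) *\<^sub>R y = T (a *\<^sub>R x + b *\<^sub>R z)" using T_eq by simp
    also have "\<dots> = a *\<^sub>R T x + b *\<^sub>R T z"
      using T xz unfolding bounded_linear_on_sub_def linear_on_sub_def by blast
    also have "\<dots> = (a * \<psi> x + b * \<psi> z) *\<^sub>R y" using T_eq xz by (simp add: scaleR_add_left)
    finally show "\<psi> (a *\<^sub>R x + b *\<^sub>R z) = a *\<^sub>R \<psi> x + b *\<^sub>R \<psi> z" using y by simp
  qed
  moreover obtain B where B: "\<forall>x\<in>X. norm (T x) \<le> B * norm x"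
    using T unfolding bounded_linear_on_sub_def by blast
  have "\<forall>x\<in>X. norm (\<psi> x) \<le> (B / norm y) * norm x"
    using B T_eq y by (simp add: le_divide_eq mult.commute mult.left_commute)
  ultimately have "bounded_linear_on_sub X \<psi>" unfolding bounded_linear_on_sub_def by blast
  then show ?thesis using that T_eq by blast
qed

lemma rank_one_op_factor:
  fixes T :: "('a::topological_space \<Rightarrow>\<^sub>C real) \<Rightarrow> ('a \<Rightarrow>\<^sub>C real)"
  assumes K: "compact (UNIV :: 'a set)" and sub: "subspace X" and T: "rank_one_op X T"
  obtains \<psi> and y :: "'a \<Rightarrow>\<^sub>C real" and t0
    where "bounded_linear_on_sub X \<psi>" "0 < opnorm_on X \<psi>" "norm y = 1" "y t0 = 1" "\<And>x. x \<in> X \<Longrightarrow> T x = \<psi> x *\<^sub>R y"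
proof -
  have T_bl: "bounded_linear_on_sub X T" and "dim (T ` X) = 1" using T by (auto simp: rank_one_op_def)
  obtain B where B: "B \<subseteq> T ` X" "independent B" "T ` X \<subseteq> span B" "card B = dim (T ` X)"
    by (rule basis_exists)
  then have "card B = 1" using \<open>dim (T ` X) = 1\<close> by simp
  then obtain w where "B = {w}" by (rule card_1_singletonE)
  with B have w: "w \<in> T ` X" "w \<noteq> 0" "T ` X \<subseteq> span {w}" using dependent_zero by blast+
  obtain t0 where t0: "norm w = \<bar>w t0\<bar>" by (rule bcontfun_norm_attained[OF K])
  define y where "y = (1 / w t0) *\<^sub>R w"
  have wt0: "w t0 \<noteq> 0" using t0 w(2) by auto
  then have y: "norm y = 1" "y t0 = 1" "y \<noteq> 0" using t0 by (auto simp: y_def)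
  have "T ` X \<subseteq> span {y}"
  proof
    fix z assume "z \<in> T ` X"
    then obtain c where "z = c *\<^sub>R w" using w(3) by (auto simp: span_singleton)
    then have "z = (c * w t0) *\<^sub>R y" using wt0 by (simp add: y_def)
    then show "z \<in> span {y}" by (simp add: span_scale span_base)
  qed
  then obtain \<psi> where \<psi>: "bounded_linear_on_sub X \<psi>" "\<And>x. x \<in> X \<Longrightarrow> T x = \<psi> x *\<^sub>R y"
    by (rule bounded_linear_on_sub_factor_span[OF sub T_bl y(3)]) (rule that)
  have "0 < opnorm_on X \<psi>"
  proof (rule ccontr)
    assume "\<not> 0 < opnorm_on X \<psi>"
    then have "\<psi> x = 0" if "x \<in> X" for x
      using norm_le_opnorm_on_mult[OF sub \<psi>(1) that] opnorm_on_nonneg[OF sub \<psi>(1)] by simp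
    then show False using w(1,2) \<psi>(2) by force
  qed
  then show ?thesis using that \<psi> y by blast
qed

section \<open>Point evaluations added to a functional\<close>

definition norm_add_delta :: "('a::topological_space \<Rightarrow>\<^sub>C real) set \<Rightarrow> (('a \<Rightarrow>\<^sub>C real) \<Rightarrow> real) \<Rightarrow> 'a \<Rightarrow> real"
  where "norm_add_delta X \<phi> u = dual_norm X (\<lambda>f. \<phi> f + delta_eval u f)"

lemma norm_add_delta_eval_le:
  assumes "subspace X" "\<phi> \<in> dual_sphere X" "f \<in> X" "norm f \<le> 1"
  shows "norm (\<phi> f + delta_eval u f) \<le> 2"
proof -
  have "norm (\<phi> f) \<le> 1" using dual_sphere_abs_le[OF assms(1-3)] assms(4) by simp
  moreover have "norm (delta_eval u f) \<le> 1"
    unfolding delta_eval_def using norm_bounded[of f u] assms(4) by linarith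
  ultimately show ?thesis using norm_triangle_ineq[of "\<phi> f" "delta_eval u f"] by linarith
qed

lemma norm_add_delta_le_2:
  assumes "subspace X" "\<phi> \<in> dual_sphere X"
  shows "norm_add_delta X \<phi> u \<le> 2"
  unfolding norm_add_delta_def by (rule opnorm_on_le[OF assms(1)]) (rule norm_add_delta_eval_le[OF assms])

lemma abs_le_norm_add_delta:
  fixes X :: "('a::topological_space \<Rightarrow>\<^sub>C real) set"
  assumes "subspace X" "\<phi> \<in> dual_sphere X" "f \<in> X" "norm f \<le> 1"
  shows "\<bar>\<phi> f + f u\<bar> \<le> norm_add_delta X \<phi> u"
  using norm_le_opnorm_on[where M=2, OF norm_add_delta_eval_le[OF assms(1,2)] assms(3,4)]
  by (simp add: norm_add_delta_def delta_eval_def)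

text \<open>Replacing f by -f removes the absolute value from the norm.\<close>

lemma norm_add_delta_witness:
  fixes X :: "('a::topological_space \<Rightarrow>\<^sub>C real) set"
  assumes sub: "subspace X" and \<phi>: "\<phi> \<in> dual_sphere X" and c: "c < norm_add_delta X \<phi> u"
  obtains x where "x \<in> X" "norm x \<le> 1" "c < \<phi> x + x u"
proof -
  have "\<And>f. f \<in> X \<Longrightarrow> norm f \<le> 1 \<Longrightarrow> norm (\<phi> f + delta_eval u f) \<le> 2"
    by (rule norm_add_delta_eval_le[OF sub \<phi>])
  then obtain f where f: "f \<in> X" "norm f \<le> 1" "c < \<bar>\<phi> f + f u\<bar>"
    using opnorm_on_approx[OF sub, of "\<lambda>f. \<phi> f + delta_eval u f" 2 c] c
    by (auto simp: norm_add_delta_def delta_eval_def)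
  have "\<phi> (- f) = - \<phi> f"
    using linear_on_sub_scaleR[of X \<phi> f "-1"] \<phi> f(1) by (simp add: dual_sphere_def bounded_linear_on_sub_def)
  moreover have "- f \<in> X" "norm (- f) \<le> 1" using sub f by (auto simp: subspace_neg)
  ultimately show ?thesis using that f by (cases "0 < \<phi> f + f u") auto
qed

lemma open_norm_add_delta_gt:
  fixes X :: "('a::topological_space \<Rightarrow>\<^sub>C real) set"
  assumes sub: "subspace X" and \<phi>: "\<phi> \<in> dual_sphere X"
  shows "open {u. c < norm_add_delta X \<phi> u}"
proof -
  have eq: "{u. c < norm_add_delta X \<phi> u} = (\<Union>f\<in>{f\<in>X. norm f \<le> 1}. {u. c < \<phi> f + f u})"
  proof (intro equalityI subsetI)
    fix u assume "u \<in> {u. c < norm_add_delta X \<phi> u}"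
    then obtain f where "f \<in> X" "norm f \<le> 1" "c < \<phi> f + f u"
      using norm_add_delta_witness[OF sub \<phi>] by blast
    then show "u \<in> (\<Union>f\<in>{f\<in>X. norm f \<le> 1}. {u. c < \<phi> f + f u})" by blast
  next
    fix u assume "u \<in> (\<Union>f\<in>{f\<in>X. norm f \<le> 1}. {u. c < \<phi> f + f u})"
    then obtain f where "f \<in> X" "norm f \<le> 1" "c < \<phi> f + f u" by blast
    then show "u \<in> {u. c < norm_add_delta X \<phi> u}"
      using abs_le_norm_add_delta[OF sub \<phi>, of f u] by auto
  qed
  have "open {u. c < \<phi> f + f u}" for f
    by (intro open_Collect_less) (auto intro: continuous_intros)
  then show ?thesis unfolding eq by (intro open_UN ballI)
qed

definition daugavet_points_dense :: "('a::topological_space \<Rightarrow>\<^sub>C real) set \<Rightarrow> bool"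
  where "daugavet_points_dense X \<longleftrightarrow>
    (\<forall>\<epsilon>>0. \<forall>\<phi>\<in>dual_sphere X. \<forall>U::'a set. open U \<and> U \<noteq> {} \<longrightarrow>
       (\<exists>u\<in>U. norm_add_delta X \<phi> u > 2 - \<epsilon>))"

definition daugavet_points_gdelta :: "('a::topological_space \<Rightarrow>\<^sub>C real) set \<Rightarrow> bool"
  where "daugavet_points_gdelta X \<longleftrightarrow>
    (\<forall>\<phi>\<in>dual_sphere X. \<forall>U::'a set. open U \<and> U \<noteq> {} \<longrightarrow>
       (\<exists>G. G \<noteq> {} \<and> G \<subseteq> U \<and> closed G \<and> gdelta_set G \<and> (\<forall>u\<in>G. norm_add_delta X \<phi> u = 2)))"

lemma daugavet_points_dense_if_gdelta:
  fixes X :: "('a::topological_space \<Rightarrow>\<^sub>C real) set"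
  assumes "daugavet_points_gdelta X"
  shows "daugavet_points_dense X"
  unfolding daugavet_points_dense_def
proof (intro allI impI ballI)
  fix \<epsilon> :: real and \<phi> and U :: "'a set"
  assume "\<epsilon> > 0" and \<phi>: "\<phi> \<in> dual_sphere X" and U: "open U \<and> U \<noteq> {}"
  obtain G where G: "G \<noteq> {}" "G \<subseteq> U" "\<forall>u\<in>G. norm_add_delta X \<phi> u = 2"
    using assms[unfolded daugavet_points_gdelta_def, rule_format, OF \<phi> U] by auto
  then obtain u where "u \<in> G" by blast
  then have "u \<in> U" "norm_add_delta X \<phi> u > 2 - \<epsilon>" using G \<open>\<epsilon> > 0\<close> by auto
  then show "\<exists>u\<in>U. norm_add_delta X \<phi> u > 2 - \<epsilon>" by blast
qed

lemma daugavet_points_gdelta_if_dense: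
  fixes X :: "('a::t2_space \<Rightarrow>\<^sub>C real) set"
  assumes K: "compact (UNIV :: 'a set)" and sub: "subspace X" and dense: "daugavet_points_dense X"
  shows "daugavet_points_gdelta X"
  unfolding daugavet_points_gdelta_def
proof (intro ballI allI impI)
  fix \<phi> and U :: "'a set"
  assume \<phi>: "\<phi> \<in> dual_sphere X" and U: "open U \<and> U \<noteq> {}"
  define V where "V n = {u. 2 - 1 / real (Suc n) < norm_add_delta X \<phi> u}" for n
  have V_open: "open (V n)" for n unfolding V_def by (rule open_norm_add_delta_gt[OF sub \<phi>])
  have V_dense: "S \<inter> V n \<noteq> {}" if "open S" "S \<noteq> {}" for S n
  proof -
    have "1 / real (Suc n) > 0" by simp
    then have "\<exists>u\<in>S. 2 - 1 / real (Suc n) < norm_add_delta X \<phi> u"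
      using dense[unfolded daugavet_points_dense_def, rule_format, OF _ \<phi>] that by blast
    then show ?thesis by (auto simp: V_def)
  qed
  have U_open: "open U" and U_ne: "U \<noteq> {}" using U by simp_all
  obtain G where G: "G \<noteq> {}" "G \<subseteq> U" "closed G" "gdelta_set G" "G \<subseteq> (\<Inter>n. V n)"
    by (rule compact_t2_closed_gdelta_in_dense_opens[OF K V_open V_dense U_open U_ne])
  have "norm_add_delta X \<phi> u = 2" if "u \<in> G" for u
  proof (rule antisym)
    show "norm_add_delta X \<phi> u \<le> 2" by (rule norm_add_delta_le_2[OF sub \<phi>])
    have near: "2 - 1 / real (Suc n) < norm_add_delta X \<phi> u" for n using G(5) that by (auto simp: V_def)
    show "2 \<le> norm_add_delta X \<phi> u"
    proof (rule field_le_epsilon)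
      fix e :: real assume "0 < e"
      then obtain n where "1 / real (Suc n) < e" by (rule nat_approx_posE)
      then show "2 \<le> norm_add_delta X \<phi> u + e" using near[of n] by linarith
    qed
  qed
  then show "\<exists>G. G \<noteq> {} \<and> G \<subseteq> U \<and> closed G \<and> gdelta_set G \<and> (\<forall>u\<in>G. norm_add_delta X \<phi> u = 2)"
    using G by blast
qed

text \<open>If a and b have opposite signs, then \<bar>b + a * s\<bar> \<le> 1.\<close>

lemma abs_add_gt_if_abs_add_scaled_gt:
  fixes a b s e :: real
  assumes "\<bar>a\<bar> \<le> 1" "\<bar>b\<bar> \<le> 1" "0 \<le> s" "s \<le> 1" "e < 1" "2 - e < \<bar>b + a * s\<bar>"
  shows "2 - e < \<bar>a + b\<bar>"
proof (cases "a \<ge> 0")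
  case True
  then have "0 \<le> a * s" "a * s \<le> a" using assms(3,4) by (simp_all add: mult_left_le)
  then show ?thesis using True assms by linarith
next
  case False
  then have "a * s \<le> 0" "a \<le> a * s"
    using assms(3,4) mult_left_mono_neg[of s 1 a] by (simp_all add: mult_nonpos_nonneg)
  then show ?thesis using False assms by linarith
qed

lemma daugavet_pair_opnorm_rank_one:
  assumes sub: "subspace X" and daugavet: "daugavet_pair X"
    and \<phi>: "\<phi> \<in> dual_sphere X" and y: "norm y = 1"
  shows "opnorm_on X (\<lambda>x. x + \<phi> x *\<^sub>R y) = 2"
proof -
  obtain x0 where "x0 \<in> X" "\<phi> x0 \<noteq> 0" by (rule dual_sphere_nonzero[OF sub \<phi>])
  then have "rank_one_op X (\<lambda>x. \<phi> x *\<^sub>R y)"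
    using \<phi> y by (intro rank_one_op_scaleR_right[OF sub]) (auto simp: dual_sphere_def)
  moreover have "opnorm_on X (\<lambda>x. \<phi> x *\<^sub>R y) = 1"
    using \<phi> y opnorm_on_cong[of X "\<lambda>x. \<phi> x *\<^sub>R y" \<phi>] by (simp add: dual_sphere_def)
  ultimately show ?thesis using daugavet unfolding daugavet_pair_def by simp
qed

lemma daugavet_points_dense_if_daugavet_pair:
  fixes X :: "('a::t2_space \<Rightarrow>\<^sub>C real) set"
  assumes K: "compact (UNIV :: 'a set)" and sub: "subspace X" and daugavet: "daugavet_pair X"
  shows "daugavet_points_dense X"
  unfolding daugavet_points_dense_def
proof (intro allI impI ballI)
  fix \<epsilon> :: real and \<phi> and U :: "'a set"
  assume \<epsilon>: "\<epsilon> > 0" and \<phi>: "\<phi> \<in> dual_sphere X" and U: "open U \<and> U \<noteq> {}"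
  define e where "e = min \<epsilon> (1/2)"
  have e: "0 < e" "e \<le> \<epsilon>" "e < 1" using \<epsilon> by (auto simp: e_def)
  obtain u0 where u0: "u0 \<in> U" using U by blast
  have "open U" using U by simp
  obtain y :: "'a \<Rightarrow>\<^sub>C real"
    where y: "\<And>t. 0 \<le> y t" "\<And>t. y t \<le> 1" "y u0 = 1" "\<And>t. t \<notin> U \<Longrightarrow> y t = 0" "norm y = 1"
    by (rule compact_t2_Urysohn_bump[OF K \<open>open U\<close> u0]) (rule that)
  have bound: "norm (x + \<phi> x *\<^sub>R y) \<le> 2" if "x \<in> X" "norm x \<le> 1" for x
    using dual_sphere_abs_le[OF sub \<phi> that(1)] norm_triangle_ineq[of x "\<phi> x *\<^sub>R y"] that(2) y(5)
    by simp
  have "2 - e < opnorm_on X (\<lambda>x. x + \<phi> x *\<^sub>R y)"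
    using daugavet_pair_opnorm_rank_one[OF sub daugavet \<phi> y(5)] e(1) by simp
  then obtain x where x: "x \<in> X" "norm x \<le> 1" "2 - e < norm (x + \<phi> x *\<^sub>R y)"
    using opnorm_on_approx[of X "\<lambda>x. x + \<phi> x *\<^sub>R y" 2 "2 - e", OF sub bound] by blast
  obtain t where "2 - e < \<bar>(x + \<phi> x *\<^sub>R y) t\<bar>" by (rule bcontfun_norm_gt_imp_point[OF x(3)])
  then have t: "2 - e < \<bar>x t + \<phi> x * y t\<bar>" by simp
  have x_t: "\<bar>x t\<bar> \<le> 1" using norm_bounded[of x t] x(2) by simp
  have "t \<in> U"
  proof (rule ccontr)
    assume "t \<notin> U"
    then show False using t x_t y(4) e(3) by simp
  qed
  have "\<bar>\<phi> x\<bar> \<le> 1" using dual_sphere_abs_le[OF sub \<phi> x(1)] x(2) by simp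
  then have "2 - e < \<bar>\<phi> x + x t\<bar>"
    by (rule abs_add_gt_if_abs_add_scaled_gt[OF _ x_t y(1) y(2) e(3) t])
  then have "2 - \<epsilon> < norm_add_delta X \<phi> t"
    using abs_le_norm_add_delta[OF sub \<phi> x(1,2), of t] e(2) by linarith
  with \<open>t \<in> U\<close> show "\<exists>u\<in>U. norm_add_delta X \<phi> u > 2 - \<epsilon>" by blast
qed

lemma near_one_add_mult_ge:
  fixes n p q s d :: real
  assumes "n \<ge> 0" "0 < d" "d \<le> 1/2" "p > 1 - d" "s > 1 - d" "q > 1 - d"
  shows "q + n * (p * s) \<ge> 1 + n - d * (1 + 2 * n)"
proof -
  have "p * s \<ge> (1 - d) * (1 - d)" using assms by (intro mult_mono) auto
  moreover have "(1 - d) * (1 - d) \<ge> 1 - 2 * d" by (simp add: algebra_simps)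
  ultimately have "p * s \<ge> 1 - 2 * d" by linarith
  then have "n * (p * s) \<ge> n * (1 - 2 * d)" using assms(1) by (rule mult_left_mono)
  then show ?thesis using assms by (simp add: algebra_simps)
qed

text \<open>Near a point where y peaks, the point condition provides x with x and \<phi> x
  both close to 1, so x + n \<phi>(x) y almost reaches 1 + n.\<close>

lemma daugavet_rank_one_lower_bound:
  fixes X :: "('a::topological_space \<Rightarrow>\<^sub>C real) set"
    and y :: "'a \<Rightarrow>\<^sub>C real"
  assumes sub: "subspace X" and dense: "daugavet_points_dense X" and \<phi>: "\<phi> \<in> dual_sphere X"
    and n: "0 \<le> n" and y: "norm y = 1" "y t0 = 1"
  shows "1 + n \<le> opnorm_on X (\<lambda>x. x + (n * \<phi> x) *\<^sub>R y)"
proof -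
  let ?J = "opnorm_on X (\<lambda>x. x + (n * \<phi> x) *\<^sub>R y)"
  have bound: "norm (x + (n * \<phi> x) *\<^sub>R y) \<le> 1 + n" if "x \<in> X" "norm x \<le> 1" for x
  proof -
    have "norm ((n * \<phi> x) *\<^sub>R y) \<le> n"
      using dual_sphere_abs_le[OF sub \<phi> that(1)] that(2) n y(1) by (simp add: abs_mult mult_left_le)
    then show ?thesis using norm_triangle_ineq[of x "(n * \<phi> x) *\<^sub>R y"] that(2) by linarith
  qed
  have approx: "1 + n - d * (1 + 2 * n) \<le> ?J" if d: "0 < d" "d \<le> 1/2" for d
  proof -
    have "open {t. 1 - d < y t}" by (intro open_Collect_less) (auto intro: continuous_intros)
    moreover have "t0 \<in> {t. 1 - d < y t}" using y(2) d by simp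
    ultimately have "\<exists>u\<in>{t. 1 - d < y t}. 2 - d < norm_add_delta X \<phi> u"
      using dense[unfolded daugavet_points_dense_def, rule_format, OF d(1) \<phi>] by blast
    then obtain u where u: "1 - d < y u" "2 - d < norm_add_delta X \<phi> u" by blast
    obtain x where x: "x \<in> X" "norm x \<le> 1" "2 - d < \<phi> x + x u"
      by (rule norm_add_delta_witness[OF sub \<phi> u(2)])
    have "\<phi> x \<le> 1" "x u \<le> 1"
      using dual_sphere_abs_le[OF sub \<phi> x(1)] norm_bounded[of x u] x(2) by auto
    then have "1 - d < \<phi> x" "1 - d < x u" using x(3) by linarith+
    then have "1 + n - d * (1 + 2 * n) \<le> x u + n * (\<phi> x * y u)"
      using near_one_add_mult_ge[OF n d(1) d(2) _ u(1)] by blast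
    also have "\<dots> \<le> norm (x + (n * \<phi> x) *\<^sub>R y)"
      using norm_bounded[of "x + (n * \<phi> x) *\<^sub>R y" u] by simp
    also have "\<dots> \<le> ?J" by (rule norm_le_opnorm_on[OF bound x(1,2)])
    finally show ?thesis .
  qed
  have "((\<lambda>d. 1 + n - d * (1 + 2 * n)) \<longlongrightarrow> 1 + n) (at_right 0)"
    by (intro tendsto_eq_intros) auto
  moreover have "\<forall>\<^sub>F d in at_right 0. 1 + n - d * (1 + 2 * n) \<le> ?J"
  proof -
    have "\<forall>\<^sub>F d in at_right (0::real). d \<in> {0<..<1/2}" by (rule eventually_at_right_real) simp
    then show ?thesis by eventually_elim (auto intro!: approx)
  qed
  ultimately show ?thesis by (rule tendsto_upperbound) simp
qed

lemma daugavet_pair_if_daugavet_points_dense: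
  fixes X :: "('a::t2_space \<Rightarrow>\<^sub>C real) set"
  assumes K: "compact (UNIV :: 'a set)" and sub: "subspace X" and dense: "daugavet_points_dense X"
  shows "daugavet_pair X"
  unfolding daugavet_pair_def
proof (intro allI impI)
  fix T :: "('a \<Rightarrow>\<^sub>C real) \<Rightarrow> ('a \<Rightarrow>\<^sub>C real)"
  assume "rank_one_op X T"
  then obtain \<psi> and y :: "'a \<Rightarrow>\<^sub>C real" and t0
    where \<psi>: "bounded_linear_on_sub X \<psi>" "0 < opnorm_on X \<psi>"
      and y: "norm y = 1" "y t0 = 1" and T: "\<And>x. x \<in> X \<Longrightarrow> T x = \<psi> x *\<^sub>R y"
    by (rule rank_one_op_factor[OF K sub]) (rule that)
  define n where "n = opnorm_on X \<psi>"
  have n: "0 < n" using \<psi>(2) by (simp add: n_def)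
  define \<phi> where "\<phi> = (\<lambda>x. \<psi> x / n)"
  have \<phi>: "\<phi> \<in> dual_sphere X" using dual_sphere_normalize[OF sub \<psi>] by (simp add: \<phi>_def n_def)
  have J: "opnorm_on X (\<lambda>x. x + T x) = opnorm_on X (\<lambda>x. x + (n * \<phi> x) *\<^sub>R y)"
    using T n by (intro opnorm_on_cong) (simp add: \<phi>_def)
  have "opnorm_on X T = n"
    using T y(1) opnorm_on_cong[of X T \<psi>] by (simp add: n_def)
  moreover have "opnorm_on X (\<lambda>x. x + T x) \<le> 1 + n"
  proof (rule opnorm_on_le[OF sub])
    fix x assume x: "x \<in> X" "norm x \<le> 1"
    have "norm (T x) = \<bar>\<psi> x\<bar>" using T[OF x(1)] y(1) by simp
    also have "\<dots> \<le> n * norm x" using norm_le_opnorm_on_mult[OF sub \<psi>(1) x(1)] by (simp add: n_def)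
    also have "\<dots> \<le> n" using x(2) n by (simp add: mult_left_le)
    finally show "norm (x + T x) \<le> 1 + n" using norm_triangle_ineq[of x "T x"] x(2) by linarith
  qed
  moreover have "1 + n \<le> opnorm_on X (\<lambda>x. x + T x)"
    unfolding J using n by (intro daugavet_rank_one_lower_bound[OF sub dense \<phi> _ y]) simp
  ultimately show "opnorm_on X (\<lambda>x. x + T x) = 1 + opnorm_on X T" by simp
qed

theorem mainTheorem5:
  fixes X :: "('a::t2_space \<Rightarrow>\<^sub>C real) set"
  assumes K_compact: "compact (UNIV :: 'a set)"
    and no_isolated: "\<forall>k::'a. \<not> open {k}"
    and X_subspace: "subspace X"
    and X_closed: "closed X"
  shows "(daugavet_pair X
           \<longleftrightarrow> (\<forall>\<epsilon>>0. \<forall>\<phi>\<in>dual_sphere X. \<forall>U::'a set. open U \<and> U \<noteq> {} \<longrightarrow>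
                 (\<exists>u\<in>U. dual_norm X (\<lambda>f. \<phi> f + delta_eval u f) > 2 - \<epsilon>)))
       \<and> (daugavet_pair X
           \<longleftrightarrow> (\<forall>\<phi>\<in>dual_sphere X. \<forall>U::'a set. open U \<and> U \<noteq> {} \<longrightarrow>
                 (\<exists>G. G \<noteq> {} \<and> G \<subseteq> U \<and> closed G \<and> gdelta_set G \<and>
                      (\<forall>u\<in>G. dual_norm X (\<lambda>f. \<phi> f + delta_eval u f) = 2))))"
proof -
  have dense: "daugavet_pair X \<longleftrightarrow> daugavet_points_dense X"
    using daugavet_points_dense_if_daugavet_pair[OF K_compact X_subspace]
      daugavet_pair_if_daugavet_points_dense[OF K_compact X_subspace] by blast
  moreover have "daugavet_pair X \<longleftrightarrow> daugavet_points_gdelta X"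
    using dense daugavet_points_dense_if_gdelta daugavet_points_gdelta_if_dense[OF K_compact X_subspace]
    by blast
  ultimately show ?thesis
    unfolding daugavet_points_dense_def daugavet_points_gdelta_def norm_add_delta_def by (rule conjI)
qed

end
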